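(* Let $Z$ be a fat point scheme in $\mathbb{P}^1\times\mathbb{P}^1$. Then $\alpha_Z^*\unrhd\beta_Z$.
   Context: $\mathbf{k}$ algebraically closed; a fat point scheme $Z$ in $\mathbb{P}^1\times\mathbb{P}^1$ is given by distinct points with positive multiplicities. With $\pi_1(\mathrm{Supp}\,Z)=\{R_1,\dots,R_r\}$, $\pi_2(\mathrm{Supp}\,Z)=\{Q_1,\dots,Q_t\}$ and $m_{ij}$ the multiplicity of $R_i\times Q_j$ ($0$ if absent): $l_i=\max_j m_{ij}$, $a_{i,k}=\sum_j(m_{ij}-k)_+$ ($0\le k\le l_i-1$), $\alpha_Z$ = all $a_{i,k}$ in non-increasing order; $l'_j=\max_i m_{ij}$, $b_{j,k}=\sum_i(m_{ij}-k)_+$ ($0\le k\le l'_j-1$), $\beta_Z$ = all $b_{j,k}$ in non-increasing order; $(n)_+=\max\{0,n\}$. Both are partitions of $\sum\binom{m_i+1}{2}$. The conjugate of a partition $\lambda=(\lambda_1\ge\dots\ge\lambda_n)$ is $\lambda^*=(\lambda^*_1,\dots,\lambda^*_{\lambda_1})$ with $\lambda^*_i=\#\{j:\lambda_j\ge i\}$. For partitions $\lambda,\delta$ of the same integer (the shorter padded with zeros), $\lambda\unrhd\delta$ means $\lambda_1+\dots+\lambda_i\ge\delta_1+\dots+\delta_i$ for all $i$. *)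

theory Defs
  imports Main "HOL-Library.Multiset"
begin

text \<open>A fat point scheme Z in P1 x P1 is recorded by its multiplicity function
  m :: 'a x 'b => nat (points of the first / second P1 factor of types 'a / 'b);
  Supp Z = points with positive multiplicity, required to be finite.\<close>

definition fat_point_scheme :: "('a \<times> 'b \<Rightarrow> nat) \<Rightarrow> bool" where
  "fat_point_scheme m \<longleftrightarrow> finite {p. 0 < m p}"

definition supp_fp :: "('a \<times> 'b \<Rightarrow> nat) \<Rightarrow> ('a \<times> 'b) set" where
  "supp_fp m = {p. 0 < m p}"

definition proj1_fp :: "('a \<times> 'b \<Rightarrow> nat) \<Rightarrow> 'a set" where
  "proj1_fp m = fst ` supp_fp m"

definition proj2_fp :: "('a \<times> 'b \<Rightarrow> nat) \<Rightarrow> 'b set" where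
  "proj2_fp m = snd ` supp_fp m"

text \<open>l_i and a_{i,k}; natural-number subtraction is exactly (n)_+.\<close>
definition l_fp :: "('a \<times> 'b \<Rightarrow> nat) \<Rightarrow> 'a \<Rightarrow> nat" where
  "l_fp m R = Max ((\<lambda>Q. m (R, Q)) ` proj2_fp m)"

definition a_fp :: "('a \<times> 'b \<Rightarrow> nat) \<Rightarrow> 'a \<Rightarrow> nat \<Rightarrow> nat" where
  "a_fp m R k = (\<Sum>Q\<in>proj2_fp m. m (R, Q) - k)"

definition l'_fp :: "('a \<times> 'b \<Rightarrow> nat) \<Rightarrow> 'b \<Rightarrow> nat" where
  "l'_fp m Q = Max ((\<lambda>R. m (R, Q)) ` proj1_fp m)"

definition b_fp :: "('a \<times> 'b \<Rightarrow> nat) \<Rightarrow> 'b \<Rightarrow> nat \<Rightarrow> nat" where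
  "b_fp m Q k = (\<Sum>R\<in>proj1_fp m. m (R, Q) - k)"

definition alpha_fp :: "('a \<times> 'b \<Rightarrow> nat) \<Rightarrow> nat list" where
  "alpha_fp m = rev (sorted_list_of_multiset
     (\<Sum>R\<in>proj1_fp m. image_mset (a_fp m R) (mset [0..<l_fp m R])))"

definition beta_fp :: "('a \<times> 'b \<Rightarrow> nat) \<Rightarrow> nat list" where
  "beta_fp m = rev (sorted_list_of_multiset
     (\<Sum>Q\<in>proj2_fp m. image_mset (b_fp m Q) (mset [0..<l'_fp m Q])))"

definition conj_part :: "nat list \<Rightarrow> nat list" where
  "conj_part lam = map (\<lambda>i. length (filter (\<lambda>x. i \<le> x) lam))
      [1..<Suc (if lam = [] then 0 else hd lam)]"

text \<open>Dominance order; take beyond the length amounts to padding with zeros.\<close>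
definition dominates :: "nat list \<Rightarrow> nat list \<Rightarrow> bool" where
  "dominates lam del \<longleftrightarrow> (\<forall>i. sum_list (take i del) \<le> sum_list (take i lam))"

end

theory Submission imports Defs begin

text \<open>Index the parts of \<open>\<alpha>\<^sub>Z\<close> by the pairs \<open>(R\<^sub>i, k)\<close> with \<open>k < l\<^sub>i\<close> and
  those of \<open>\<beta>\<^sub>Z\<close> by the pairs \<open>(Q\<^sub>j, k')\<close> with \<open>k' < l'\<^sub>j\<close>, and join \<open>(R\<^sub>i, k)\<close> to
  \<open>(Q\<^sub>j, k')\<close> when \<open>k + k' < m\<^sub>i\<^sub>j\<close>. For fixed \<open>i, j, k\<close> exactly \<open>(m\<^sub>i\<^sub>j - k)\<^sub>+\<close> values
  of \<open>k'\<close> qualify, so \<open>a\<^sub>i\<^sub>,\<^sub>k\<close> and \<open>b\<^sub>j\<^sub>,\<^sub>k\<^sub>'\<close> are the degrees in this bipartite graph: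
  \<open>\<alpha>\<^sub>Z\<close> and \<open>\<beta>\<^sub>Z\<close> are the row and column sums of a 0-1 matrix. The easy half of
  the Gale-Ryser theorem then gives the dominance: any \<open>i\<close> columns meet a row
  with sum \<open>r\<close> in at most \<open>min i r\<close> entries, and the sum of \<open>min i r\<close> over all rows
  is the \<open>i\<close>-th partial sum of \<open>\<alpha>\<^sub>Z\<^sup>*\<close>.\<close>

definition partition_of :: "('i \<Rightarrow> nat) \<Rightarrow> 'i set \<Rightarrow> nat list" where
  "partition_of f A = rev (sorted_list_of_multiset (image_mset f (mset_set A)))"

lemma partition_of_cong:
  assumes "\<And>x. x \<in> A \<Longrightarrow> f x = g x"
  shows "partition_of f A = partition_of g A"
proof -
  have "image_mset f (mset_set A) = image_mset g (mset_set A)"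
    using assms by (cases "finite A") (auto intro: image_mset_cong)
  then show ?thesis by (simp add: partition_of_def)
qed

lemma mset_partition_of: "mset (partition_of f A) = image_mset f (mset_set A)"
  by (simp add: partition_of_def)

lemma le_hd_partition_of:
  assumes "x \<in> set (partition_of f A)"
  shows "x \<le> hd (partition_of f A)"
proof -
  have "sorted_wrt (\<ge>) (partition_of f A)"
    by (simp add: partition_of_def sorted_wrt_rev)
  then show ?thesis using assms by (cases "partition_of f A") auto
qed

lemma sum_length_filter_le:
  "(\<Sum>t=1..n. length (filter (\<lambda>x. t \<le> x) xs)) = (\<Sum>x\<leftarrow>xs. min n x)"
proof (induction xs)
  case Nil then show ?case by simp
next
  case (Cons a xs)
  have "(\<Sum>t=1..n. length (filter (\<lambda>x. t \<le> x) (a # xs)))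
      = (\<Sum>t=1..n. (if t \<le> a then 1 else 0) + length (filter (\<lambda>x. t \<le> x) xs))"
    by (rule sum.cong) auto
  also have "\<dots> = (\<Sum>t=1..n. if t \<le> a then 1 else 0) + (\<Sum>x\<leftarrow>xs. min n x)"
    by (simp only: sum.distrib Cons.IH)
  also have "{1..n} \<inter> {t. t \<le> a} = {1..min n a}" by auto
  then have "(\<Sum>t=1..n. if t \<le> a then 1 else 0::nat) = min n a"
    by (simp add: sum.If_cases)
  finally show ?case by simp
qed

lemma sum_list_take_conj_part:
  assumes "\<forall>x\<in>set xs. x \<le> hd xs"
  shows "sum_list (take i (conj_part xs)) = (\<Sum>x\<leftarrow>xs. min i x)"
proof (cases "xs = []")
  case True then show ?thesis by (simp add: conj_part_def)
next
  case False
  have "take i [1..<Suc (hd xs)] = [1..<Suc (min i (hd xs))]"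
    by (cases "i \<le> hd xs") (simp_all add: min_def take_upt del: upt_Suc)
  then have "sum_list (take i (conj_part xs))
      = (\<Sum>t=1..min i (hd xs). length (filter (\<lambda>x. t \<le> x) xs))"
    using False by (simp add: conj_part_def take_map sum_set_upt_conv_sum_list_nat[symmetric]
        atLeastLessThanSuc_atLeastAtMost del: upt_Suc)
  also have "\<dots> = (\<Sum>x\<leftarrow>xs. min (min i (hd xs)) x)" by (rule sum_length_filter_le)
  also have "\<dots> = (\<Sum>x\<leftarrow>xs. min i x)"
    using assms by (intro arg_cong[where f=sum_list] map_cong) auto
  finally show ?thesis .
qed

lemma sum_list_take_conj_part_partition_of:
  "sum_list (take i (conj_part (partition_of f A))) = (\<Sum>x\<in>A. min i (f x))"
proof -
  have "sum_list (take i (conj_part (partition_of f A))) = (\<Sum>x\<leftarrow>partition_of f A. min i x)"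
    using le_hd_partition_of by (blast intro: sum_list_take_conj_part)
  also have "\<dots> = sum_mset (image_mset (min i) (mset (partition_of f A)))"
    by (metis mset_map sum_mset_sum_list)
  also have "\<dots> = (\<Sum>x\<in>A. min i (f x))"
    by (simp add: mset_partition_of sum_unfold_sum_mset image_mset.compositionality comp_def)
  finally show ?thesis .
qed

lemma subseteq_image_mset_obtain:
  assumes "T \<subseteq># image_mset f A"
  obtains B where "B \<subseteq># A" "T = image_mset f B"
proof -
  have "image_mset f A = T + (image_mset f A - T)" using assms by simp
  then obtain B C where "A = B + C" "T = image_mset f B" using image_mset_eq_plusD by blast
  then show thesis by (intro that[of B]) simp_all
qed

lemma subseteq_mset_set_eq_mset_set:
  assumes "B \<subseteq># mset_set A" "finite A"
  shows "B = mset_set (set_mset B)"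
proof (rule multiset_eqI)
  fix x
  have "count B x \<le> count (mset_set A) x" using assms(1) by (simp add: subseteq_mset_def)
  also have "\<dots> \<le> 1" using assms(2) by (simp add: count_mset_set')
  finally have "count B x \<le> 1" .
  then show "count B x = count (mset_set (set_mset B)) x"
    by (auto simp: count_mset_set' count_eq_zero_iff le_Suc_eq)
qed

lemma sum_list_take_partition_of_obtain:
  assumes "finite A"
  obtains S where "S \<subseteq> A" "card S \<le> i" "sum_list (take i (partition_of f A)) = sum f S"
proof -
  have "mset (take i (partition_of f A)) \<subseteq># image_mset f (mset_set A)"
    by (metis append_take_drop_id mset_append mset_partition_of mset_subset_eq_add_left)
  then obtain B where B: "B \<subseteq># mset_set A" "mset (take i (partition_of f A)) = image_mset f B"
    by (rule subseteq_image_mset_obtain)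
  define S where "S = set_mset B"
  have BS: "B = mset_set S"
    unfolding S_def using subseteq_mset_set_eq_mset_set[OF B(1) assms] .
  have "S \<subseteq> A" using set_mset_mono[OF B(1)] assms by (simp add: S_def)
  moreover have "card S = length (take i (partition_of f A))"
    using BS B(2) by (metis size_image_mset size_mset size_mset_set)
  moreover have "sum_list (take i (partition_of f A)) = sum f S"
    using B(2) BS by (metis sum_mset_sum_list sum_unfold_sum_mset)
  ultimately show thesis using that by simp
qed

theorem dominates_conj_part_row_degrees_column_degrees:
  fixes E :: "'i \<Rightarrow> 'j \<Rightarrow> bool"
  assumes "finite I" "finite J"
  shows "dominates (conj_part (partition_of (\<lambda>x. card {y\<in>J. E x y}) I))
                   (partition_of (\<lambda>y. card {x\<in>I. E x y}) J)"
  unfolding dominates_def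
proof
  fix i
  obtain S where S: "S \<subseteq> J" "card S \<le> i"
    and sum_S: "sum_list (take i (partition_of (\<lambda>y. card {x\<in>I. E x y}) J))
                  = (\<Sum>y\<in>S. card {x\<in>I. E x y})"
    using assms(2) by (rule sum_list_take_partition_of_obtain)
  have "finite S" using S(1) assms(2) by (rule finite_subset)
  have "(\<Sum>y\<in>S. card {x\<in>I. E x y}) = (\<Sum>y\<in>S. \<Sum>x\<in>I. if E x y then 1 else 0)"
    using assms(1) by (simp add: sum.If_cases Int_def)
  also have "\<dots> = (\<Sum>x\<in>I. \<Sum>y\<in>S. if E x y then 1 else 0)" by (rule sum.swap)
  also have "\<dots> = (\<Sum>x\<in>I. card {y\<in>S. E x y})"
    using \<open>finite S\<close> by (simp add: sum.If_cases Int_def)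
  also have "\<dots> \<le> (\<Sum>x\<in>I. min i (card {y\<in>J. E x y}))"
  proof (rule sum_mono)
    fix x
    have "card {y\<in>S. E x y} \<le> card S" using \<open>finite S\<close> by (intro card_mono) auto
    moreover have "card {y\<in>S. E x y} \<le> card {y\<in>J. E x y}"
      using assms(2) S(1) by (intro card_mono) auto
    ultimately show "card {y\<in>S. E x y} \<le> min i (card {y\<in>J. E x y})" using S(2) by simp
  qed
  finally show "sum_list (take i (partition_of (\<lambda>y. card {x\<in>I. E x y}) J))
      \<le> sum_list (take i (conj_part (partition_of (\<lambda>x. card {y\<in>J. E x y}) I)))"
    by (simp add: sum_S sum_list_take_conj_part_partition_of)
qed

lemma sum_image_mset_upt_eq_image_mset_Sigma:
  assumes "finite X"
  shows "(\<Sum>x\<in>X. image_mset (f x) (mset [0..<g x]))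
       = image_mset (\<lambda>(x, k). f x k) (mset_set (SIGMA x:X. {0..<g x}))"
  using assms
proof (induction X rule: finite_induct)
  case empty then show ?case by simp
next
  case (insert x X)
  have "(SIGMA y:insert x X. {0..<g y}) = Pair x ` {0..<g x} \<union> (SIGMA y:X. {0..<g y})" by auto
  moreover have "Pair x ` {0..<g x} \<inter> (SIGMA y:X. {0..<g y}) = {}" using insert(2) by auto
  ultimately have "mset_set (SIGMA y:insert x X. {0..<g y})
      = mset_set (Pair x ` {0..<g x}) + mset_set (SIGMA y:X. {0..<g y})"
    using insert(1) by (simp add: mset_set_Union)
  also have "mset_set (Pair x ` {0..<g x}) = image_mset (Pair x) (mset_set {0..<g x})"
    by (rule image_mset_mset_set[symmetric]) (simp add: inj_on_def)
  finally show ?case using insert by (simp add: image_mset.compositionality comp_def)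
qed

lemma card_Sigma_add_less:
  assumes "finite B" "\<And>y. y \<in> B \<Longrightarrow> f y \<le> L y"
  shows "card {z \<in> (SIGMA y:B. {0..<L y}). k + snd z < f (fst z)} = (\<Sum>y\<in>B. f y - k)"
proof -
  have "{z \<in> (SIGMA y:B. {0..<L y}). k + snd z < f (fst z)} = (SIGMA y:B. {..<f y - k})"
    using assms(2) by fastforce
  then show ?thesis using assms(1) by simp
qed

definition alpha_index_fp :: "('a \<times> 'b \<Rightarrow> nat) \<Rightarrow> ('a \<times> nat) set" where
  "alpha_index_fp m = (SIGMA R:proj1_fp m. {0..<l_fp m R})"

definition beta_index_fp :: "('a \<times> 'b \<Rightarrow> nat) \<Rightarrow> ('b \<times> nat) set" where
  "beta_index_fp m = (SIGMA Q:proj2_fp m. {0..<l'_fp m Q})"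

definition fp_incident :: "('a \<times> 'b \<Rightarrow> nat) \<Rightarrow> 'a \<times> nat \<Rightarrow> 'b \<times> nat \<Rightarrow> bool" where
  "fp_incident m x y \<longleftrightarrow> snd x + snd y < m (fst x, fst y)"

lemma finite_proj1_fp: "fat_point_scheme m \<Longrightarrow> finite (proj1_fp m)"
  by (simp add: fat_point_scheme_def proj1_fp_def supp_fp_def)

lemma finite_proj2_fp: "fat_point_scheme m \<Longrightarrow> finite (proj2_fp m)"
  by (simp add: fat_point_scheme_def proj2_fp_def supp_fp_def)

lemma finite_alpha_index_fp: "fat_point_scheme m \<Longrightarrow> finite (alpha_index_fp m)"
  by (simp add: alpha_index_fp_def finite_proj1_fp)

lemma finite_beta_index_fp: "fat_point_scheme m \<Longrightarrow> finite (beta_index_fp m)"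
  by (simp add: beta_index_fp_def finite_proj2_fp)

lemma le_l_fp: "fat_point_scheme m \<Longrightarrow> Q \<in> proj2_fp m \<Longrightarrow> m (R, Q) \<le> l_fp m R"
  unfolding l_fp_def by (intro Max_ge) (simp_all add: finite_proj2_fp)

lemma le_l'_fp: "fat_point_scheme m \<Longrightarrow> R \<in> proj1_fp m \<Longrightarrow> m (R, Q) \<le> l'_fp m Q"
  unfolding l'_fp_def by (intro Max_ge) (simp_all add: finite_proj1_fp)

lemma a_fp_eq_card_fp_incident:
  assumes "fat_point_scheme m" "R \<in> proj1_fp m"
  shows "a_fp m R k = card {y \<in> beta_index_fp m. fp_incident m (R, k) y}"
  using card_Sigma_add_less[of "proj2_fp m" "\<lambda>Q. m (R, Q)" "l'_fp m" k]
  by (simp add: assms finite_proj2_fp le_l'_fp a_fp_def beta_index_fp_def fp_incident_def)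

lemma b_fp_eq_card_fp_incident:
  assumes "fat_point_scheme m" "Q \<in> proj2_fp m"
  shows "b_fp m Q k = card {x \<in> alpha_index_fp m. fp_incident m x (Q, k)}"
  using card_Sigma_add_less[of "proj1_fp m" "\<lambda>R. m (R, Q)" "l_fp m" k]
  by (simp add: assms finite_proj1_fp le_l_fp b_fp_def alpha_index_fp_def fp_incident_def
      add.commute)

lemma alpha_fp_eq_partition_of:
  assumes "fat_point_scheme m"
  shows "alpha_fp m
    = partition_of (\<lambda>x. card {y \<in> beta_index_fp m. fp_incident m x y}) (alpha_index_fp m)"
proof -
  have "alpha_fp m = partition_of (\<lambda>(R, k). a_fp m R k) (alpha_index_fp m)"
    unfolding alpha_fp_def partition_of_def alpha_index_fp_def
    by (simp only: sum_image_mset_upt_eq_image_mset_Sigma[OF finite_proj1_fp[OF assms]])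
  also have "\<dots> = partition_of (\<lambda>x. card {y \<in> beta_index_fp m. fp_incident m x y}) (alpha_index_fp m)"
    by (rule partition_of_cong) (auto simp: alpha_index_fp_def assms a_fp_eq_card_fp_incident)
  finally show ?thesis .
qed

lemma beta_fp_eq_partition_of:
  assumes "fat_point_scheme m"
  shows "beta_fp m
    = partition_of (\<lambda>y. card {x \<in> alpha_index_fp m. fp_incident m x y}) (beta_index_fp m)"
proof -
  have "beta_fp m = partition_of (\<lambda>(Q, k). b_fp m Q k) (beta_index_fp m)"
    unfolding beta_fp_def partition_of_def beta_index_fp_def
    by (simp only: sum_image_mset_upt_eq_image_mset_Sigma[OF finite_proj2_fp[OF assms]])
  also have "\<dots> = partition_of (\<lambda>y. card {x \<in> alpha_index_fp m. fp_incident m x y}) (beta_index_fp m)"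
    by (rule partition_of_cong) (auto simp: beta_index_fp_def assms b_fp_eq_card_fp_incident)
  finally show ?thesis .
qed

theorem theorem3p16:
  fixes m :: "'a \<times> 'b \<Rightarrow> nat"
  assumes "fat_point_scheme m"
  shows "dominates (conj_part (alpha_fp m)) (beta_fp m)"
  unfolding alpha_fp_eq_partition_of[OF assms] beta_fp_eq_partition_of[OF assms]
  by (intro dominates_conj_part_row_degrees_column_degrees finite_alpha_index_fp
      finite_beta_index_fp assms)

end
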